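(* For every term variable $x$ and every $\delta\in\mathcal{T}_D$: $x\in[\![\delta]\!]$.
   Context: $\lambda\mu$-calculus (Parigot). Terms $M,N ::= x \mid \lambda x.M \mid MN \mid \mu\alpha.[\beta]M$ over disjoint denumerable sets of term variables and names. Structural substitution $T[\alpha\Leftarrow L]$ replaces every subterm $[\alpha]N$ of $T$ by $[\alpha]N'L$ where $N'=N[\alpha\Leftarrow L]$ (recursively). Reduction is the compatible closure of $(\lambda x.M)N\to M[N/x]$ (capture-avoiding) and $(\mu\beta.[\gamma]M)N\to\mu\beta.(([\gamma]M)[\beta\Leftarrow N])$. $\mathcal{SN}$ is the set of terms with no infinite reduction sequence. A stack is a finite (possibly empty) sequence $\vec L=L_1:\cdots:L_k$ of terms, and $M\vec L$ denotes $ML_1\cdots L_k$; $\mathcal{SN}^*$ is the set of stacks of terms in $\mathcal{SN}$. Types: with constant $\nu$ and symbol $\omega$ (not itself a type), $\mathcal{T}_D:\ \delta ::= \nu \mid \omega\to\nu \mid \kappa\to\nu \mid \delta\wedge\delta$; $\mathcal{T}_C:\ \kappa ::= \delta\times\omega \mid \delta\times\kappa \mid \kappa\wedge\kappa$. Interpretation: $[\![\nu]\!]=[\![\omega\to\nu]\!]=\mathcal{SN}$; $[\![\kappa\to\nu]\!]=\{M\mid \forall\vec L\in[\![\kappa]\!].\ M\vec L\in\mathcal{SN}\}$; $[\![\delta\times\omega]\!]=\{N:\vec L\mid N\in[\![\delta]\!],\vec L\in\mathcal{SN}^*\}$; $[\![\delta\times\kappa]\!]=\{N:\vec L\mid N\in[\![\delta]\!],\vec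 L\in[\![\kappa]\!]\}$; $[\![\sigma\wedge\tau]\!]=[\![\sigma]\!]\cap[\![\tau]\!]$. *)

theory Defs
  imports Main
begin

text \<open>Term variables and names are two disjoint sorts of de Bruijn indices.
  Var i is the term variable i; Lam M binds a term variable;
  Mu b M stands for mu alpha.[beta]M where the mu binds a name (index 0 inside M)
  and b is the de Bruijn index of the name beta, counted inside the binder.\<close>

datatype trm = Var nat | Lam trm | App trm trm | Mu nat trm

primrec liftT :: "nat \<Rightarrow> trm \<Rightarrow> trm" where
  "liftT k (Var i) = (if i < k then Var i else Var (Suc i))"
| "liftT k (Lam M) = Lam (liftT (Suc k) M)"
| "liftT k (App M N) = App (liftT k M) (liftT k N)"
| "liftT k (Mu b M) = Mu b (liftT k M)"

primrec liftN :: "nat \<Rightarrow> trm \<Rightarrow> trm" where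
  "liftN k (Var i) = Var i"
| "liftN k (Lam M) = Lam (liftN k M)"
| "liftN k (App M N) = App (liftN k M) (liftN k N)"
| "liftN k (Mu b M) = Mu (if b < Suc k then b else Suc b) (liftN (Suc k) M)"

primrec subst :: "trm \<Rightarrow> nat \<Rightarrow> trm \<Rightarrow> trm" where
  "subst (Var i) k s = (if i < k then Var i else if i = k then s else Var (i - 1))"
| "subst (Lam M) k s = Lam (subst M (Suc k) (liftT 0 s))"
| "subst (App M N) k s = App (subst M k s) (subst N k s)"
| "subst (Mu b M) k s = Mu b (subst M k (liftN 0 s))"

text \<open>Structural substitution T[k <= L]: every subterm [k]N becomes [k](N' L)
  where N' = N[k <= L].\<close>
primrec structsubst :: "trm \<Rightarrow> nat \<Rightarrow> trm \<Rightarrow> trm" where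
  "structsubst (Var i) k L = Var i"
| "structsubst (Lam M) k L = Lam (structsubst M k (liftT 0 L))"
| "structsubst (App M N) k L = App (structsubst M k L) (structsubst N k L)"
| "structsubst (Mu b M) k L =
     (let L' = liftN 0 L; M' = structsubst M (Suc k) L'
      in Mu b (if b = Suc k then App M' L' else M'))"

text \<open>Structural substitution applied to a command [b]M (b the name index).\<close>
definition structcmd :: "nat \<Rightarrow> trm \<Rightarrow> nat \<Rightarrow> trm \<Rightarrow> trm" where
  "structcmd b M k L = (let M' = structsubst M k L in if b = k then App M' L else M')"

text \<open>One-step reduction: compatible closure of beta and structural (mu) reduction.
  (mu beta.[gamma]M) N  \<rightarrow>  mu beta.(([gamma]M)[beta <= N]); inside the binder beta is
  index 0 and N has to be shifted over the name binder.\<close>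
inductive red :: "trm \<Rightarrow> trm \<Rightarrow> bool" where
  beta: "red (App (Lam M) N) (subst M 0 N)"
| mu: "red (App (Mu g M) N) (Mu g (structcmd g M 0 (liftN 0 N)))"
| lam: "red M M' \<Longrightarrow> red (Lam M) (Lam M')"
| appL: "red M M' \<Longrightarrow> red (App M N) (App M' N)"
| appR: "red N N' \<Longrightarrow> red (App M N) (App M N')"
| muC: "red M M' \<Longrightarrow> red (Mu b M) (Mu b M')"

definition SN :: "trm set" where
  "SN = {M. \<not> (\<exists>f. f 0 = M \<and> (\<forall>i. red (f i) (f (Suc i))))}"

definition appstack :: "trm \<Rightarrow> trm list \<Rightarrow> trm" where
  "appstack M Ls = foldl App M Ls"

datatype dty = Nu | OmegaArr | KArr cty | DAnd dty dty
     and cty = DTimesOmega dty | DTimesK dty cty | KAnd cty cty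

primrec interpD :: "dty \<Rightarrow> trm set" and interpC :: "cty \<Rightarrow> trm list set" where
  "interpD Nu = SN"
| "interpD OmegaArr = SN"
| "interpD (KArr k) = {M. \<forall>Ls \<in> interpC k. appstack M Ls \<in> SN}"
| "interpD (DAnd d1 d2) = interpD d1 \<inter> interpD d2"
| "interpC (DTimesOmega d) = {N # Ls | N Ls. N \<in> interpD d \<and> set Ls \<subseteq> SN}"
| "interpC (DTimesK d k) = {N # Ls | N Ls. N \<in> interpD d \<and> Ls \<in> interpC k}"
| "interpC (KAnd k1 k2) = interpC k1 \<inter> interpC k2"

end

theory Submission
  imports Defs
begin

text \<open>A variable has no redex, and a term with a variable in head position can only reduce
  inside its arguments, so a variable applied to a stack of strongly normalising terms is
  strongly normalising. A mutual induction on types then shows that every \<open>[\<delta>]\<close> lies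
  between the variables and \<open>SN\<close>, while every \<open>[\<kappa>]\<close> consists of stacks of \<open>SN\<close> terms
  and contains all sufficiently long stacks of variables.\<close>

lemma termip_iff_no_infinite_chain:
  "termip r x \<longleftrightarrow> \<not> (\<exists>f. f 0 = x \<and> (\<forall>i. r (f i) (f (Suc i))))"
proof
  assume "termip r x"
  then show "\<not> (\<exists>f. f 0 = x \<and> (\<forall>i. r (f i) (f (Suc i))))"
  proof (induction rule: accp_induct_rule)
    case (1 x)
    show ?case
    proof
      assume "\<exists>f. f 0 = x \<and> (\<forall>i. r (f i) (f (Suc i)))"
      then obtain f where "f 0 = x" "\<forall>i. r (f i) (f (Suc i))" by blast
      moreover from this have "\<exists>g. g 0 = f 1 \<and> (\<forall>i. r (g i) (g (Suc i)))"
        by (intro exI[of _ "\<lambda>i. f (Suc i)"]) simp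
      moreover have "r x (f 1)"
        using \<open>f 0 = x\<close> \<open>\<forall>i. r (f i) (f (Suc i))\<close> by (metis One_nat_def)
      ultimately show False using "1.IH" by auto
    qed
  qed
next
  assume no_chain: "\<not> (\<exists>f. f 0 = x \<and> (\<forall>i. r (f i) (f (Suc i))))"
  show "termip r x"
  proof (rule ccontr)
    assume "\<not> termip r x"
    define next_step where "next_step y = (SOME z. r y z \<and> \<not> termip r z)" for y
    have next_step: "r y (next_step y) \<and> \<not> termip r (next_step y)" if "\<not> termip r y" for y
      using not_accp_down[OF that] unfolding next_step_def by (rule someI2_ex) blast+
    define f where "f i = (next_step ^^ i) x" for i
    have "\<not> termip r (f i)" for i
    proof (induction i)
      case 0
      show ?case unfolding f_def funpow_0 by fact
    next
      case (Suc i)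
      then show ?case unfolding f_def funpow.simps comp_apply by (rule next_step[THEN conjunct2])
    qed
    then have "r (f i) (f (Suc i))" for i
      unfolding f_def funpow.simps comp_apply by (rule next_step[THEN conjunct1])
    moreover have "f 0 = x" by (simp add: f_def)
    ultimately show False using no_chain by blast
  qed
qed

lemma SN_iff_termip: "M \<in> SN \<longleftrightarrow> termip red M"
  by (simp add: SN_def termip_iff_no_infinite_chain)

lemma Var_SN: "Var x \<in> SN"
  unfolding SN_iff_termip by (rule accpI) (auto elim: red.cases)

lemma App_SN_left:
  assumes "App M N \<in> SN"
  shows "M \<in> SN"
  unfolding SN_def
proof (intro CollectI notI)
  assume "\<exists>f. f 0 = M \<and> (\<forall>i. red (f i) (f (Suc i)))"
  then obtain f where "f 0 = M" "\<forall>i. red (f i) (f (Suc i))" by blast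
  then have "\<exists>g. g 0 = App M N \<and> (\<forall>i. red (g i) (g (Suc i)))"
    by (intro exI[of _ "\<lambda>i. App (f i) N"]) (simp add: red.appL)
  with assms show False unfolding SN_def by blast
qed

lemma appstack_SN_head: "appstack M Ls \<in> SN \<Longrightarrow> M \<in> SN"
  unfolding appstack_def by (induction Ls arbitrary: M) (auto dest: App_SN_left)

fun head_var :: "trm \<Rightarrow> bool" where
  "head_var (Var _) = True"
| "head_var (App M _) = head_var M"
| "head_var _ = False"

lemma red_head_var: "red M M' \<Longrightarrow> head_var M \<Longrightarrow> head_var M'"
  by (induction rule: red.induct) auto

lemma red_App_head_varE [consumes 2]:
  assumes "red (App M N) R" "head_var M"
  obtains (head) M' where "R = App M' N" "red M M'" | (arg) N' where "R = App M N'" "red N N'"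
  using assms by (cases rule: red.cases) auto

lemma App_head_var_termip:
  assumes "termip red M" "head_var M" "termip red N"
  shows "termip red (App M N)"
  using assms
proof (induction M arbitrary: N rule: accp_induct_rule)
  case (1 M)
  note IH_head = "1.IH"
  from \<open>termip red N\<close> show ?case
  proof (induction N rule: accp_induct_rule)
    case (1 N)
    show ?case
    proof (rule accpI)
      fix R assume "red\<inverse>\<inverse> R (App M N)"
      then have "red (App M N) R" by simp
      from this \<open>head_var M\<close> show "termip red R"
      proof (cases rule: red_App_head_varE)
        case (head M')
        then show ?thesis
          using IH_head "1.hyps" \<open>head_var M\<close> by (metis conversepI red_head_var)
      next
        case (arg N')
        then show ?thesis
          using "1.IH" by (metis conversepI)
      qed
    qed
  qed
qed

lemma App_head_var_SN: "head_var M \<Longrightarrow> M \<in> SN \<Longrightarrow> N \<in> SN \<Longrightarrow> App M N \<in> SN"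
  by (simp add: SN_iff_termip App_head_var_termip)

lemma appstack_head_var_SN:
  assumes "head_var M" "M \<in> SN" "set Ls \<subseteq> SN"
  shows "appstack M Ls \<in> SN"
  using assms unfolding appstack_def
  by (induction Ls arbitrary: M) (simp_all add: App_head_var_SN)

text \<open>The second clause strengthens the induction: it makes every \<open>interpC k\<close> nonempty
  (even for intersections), which is what puts \<open>interpD (KArr k)\<close> inside \<open>SN\<close>.\<close>

lemma interp_SN_and_Var:
  "interpD d \<subseteq> SN \<and> range Var \<subseteq> interpD d"
  "(\<forall>Ls \<in> interpC k. set Ls \<subseteq> SN) \<and> (\<forall>\<^sub>F n in sequentially. replicate n (Var 0) \<in> interpC k)"
proof (induction d and k)
  case (KArr k)
  then obtain n where "replicate n (Var 0) \<in> interpC k"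
    unfolding eventually_sequentially by blast
  then have "interpD (KArr k) \<subseteq> SN"
    using appstack_SN_head by auto
  moreover have "range Var \<subseteq> interpD (KArr k)"
    using KArr appstack_head_var_SN Var_SN by auto
  ultimately show ?case ..
next
  case (DTimesOmega d)
  have "\<forall>\<^sub>F n in sequentially. replicate (Suc n) (Var 0) \<in> interpC (DTimesOmega d)"
    using DTimesOmega Var_SN by (intro always_eventually) auto
  then have "\<forall>\<^sub>F n in sequentially. replicate n (Var 0) \<in> interpC (DTimesOmega d)"
    by (rule eventually_sequentially_Suc[THEN iffD1])
  moreover have "\<forall>Ls \<in> interpC (DTimesOmega d). set Ls \<subseteq> SN"
    using DTimesOmega by auto
  ultimately show ?case by (intro conjI)
next
  case (DTimesK d k)
  then have "\<forall>\<^sub>F n in sequentially. replicate (Suc n) (Var 0) \<in> interpC (DTimesK d k)"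
    by (auto elim!: eventually_mono)
  then have "\<forall>\<^sub>F n in sequentially. replicate n (Var 0) \<in> interpC (DTimesK d k)"
    by (rule eventually_sequentially_Suc[THEN iffD1])
  moreover have "\<forall>Ls \<in> interpC (DTimesK d k). set Ls \<subseteq> SN"
  proof
    fix Ls assume "Ls \<in> interpC (DTimesK d k)"
    then obtain N Ls' where "Ls = N # Ls'" "N \<in> interpD d" "Ls' \<in> interpC k"
      by auto
    with DTimesK.IH show "set Ls \<subseteq> SN"
      by (simp add: subset_iff)
  qed
  ultimately show ?case by (intro conjI)
next
  case (KAnd k1 k2)
  then show ?case
    by (simp add: eventually_conj)
qed (auto simp: Var_SN)

theorem mainTheorem9:
  fixes x :: nat and \<delta> :: dty
  shows "Var x \<in> interpD \<delta>"
  using interp_SN_and_Var(1) by blast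

end
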